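(* Let $\kappa > 3/2$ and $T_\mathrm{eff} > 0$ (temperatures in energy units), set $T_0 = (\kappa-3/2)T_\mathrm{eff}$, $T_\mathrm{core} = \frac{\kappa-3/2}{\kappa}T_\mathrm{eff}$ and $R_0 = \frac{\kappa}{\kappa-3/2} = T_\mathrm{eff}/T_\mathrm{core}$. Let $f_\kappa$ be the probability density on $(0,\infty)$ $$f_\kappa(E) = \frac{2}{\sqrt{\pi}}\,\frac{\Gamma(\kappa+1)}{\Gamma(\kappa-\tfrac12)}\,T_0^{-3/2}\,\sqrt{E}\,\Bigl(1+\frac{E}{T_0}\Bigr)^{-(\kappa+1)},$$ and for $T>0$ let $f_\mathrm{Mxw}(T)$ be the Maxwellian energy density $f_\mathrm{Mxw}(E;T) = \frac{2}{\sqrt{\pi}}T^{-3/2}\sqrt{E}\,e^{-E/T}$. Let $D_\mathrm{KL}(p\,\|\,q) = \int_0^\infty p\ln(p/q)\,dE$. Then $$\Delta D_\mathrm{KL} \equiv D_\mathrm{KL}\bigl(f_\kappa\,\|\,f_\mathrm{Mxw}(T_\mathrm{core})\bigr) - D_\mathrm{KL}\bigl(f_\kappa\,\|\,f_\mathrm{Mxw}(T_\mathrm{eff})\bigr) = \frac32\bigl[R_0 - \ln R_0 - 1\bigr] = \frac32\,d_\mathrm{IS}(T_\mathrm{eff},T_\mathrm{core}),$$ and moreover $\Delta D_\mathrm{KL} = D_\mathrm{KL}\bigl(f_\mathrm{Mxw}(T_\mathrm{eff})\,\|\,f_\mathrm{Mxw}(T_\mathrm{core})\bigr)$.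
   Context: $d_\mathrm{IS}(x,y) = x/y - \ln(x/y) - 1$ denotes the Itakura–Saito distance for $x,y>0$. The density $f_\kappa$ has mean energy $\langle E\rangle_{f_\kappa} = \tfrac32 T_\mathrm{eff}$ for all $\kappa>3/2$, so $f_\mathrm{Mxw}(T_\mathrm{eff})$ is the Maxwellian with the same mean energy as $f_\kappa$. *)

theory Defs
  imports "HOL-Analysis.Analysis"
begin

definition d_IS :: "real \<Rightarrow> real \<Rightarrow> real" where
  "d_IS x y = x / y - ln (x / y) - 1"

definition f_kappa :: "real \<Rightarrow> real \<Rightarrow> real \<Rightarrow> real" where
  "f_kappa \<kappa> Teff E =
     (let T0 = (\<kappa> - 3/2) * Teff in
      2 / sqrt pi * (Gamma (\<kappa> + 1) / Gamma (\<kappa> - 1/2)) * T0 powr (-(3/2))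
        * sqrt E * (1 + E / T0) powr (-(\<kappa> + 1)))"

definition f_Mxw :: "real \<Rightarrow> real \<Rightarrow> real" where
  "f_Mxw T E = 2 / sqrt pi * T powr (-(3/2)) * sqrt E * exp (- E / T)"

definition D_KL :: "(real \<Rightarrow> real) \<Rightarrow> (real \<Rightarrow> real) \<Rightarrow> real" where
  "D_KL p q = (LBINT E:{0<..}. p E * ln (p E / q E))"

end

theory Submission
  imports Defs "HOL-Real_Asymp.Real_Asymp"
begin

(* Since ln (f_Mxw T2 E / f_Mxw T1 E) = 3/2 ln (T1 / T2) + E / T1 - E / T2 is affine in E, for any
   probability density p on (0, infinity) with mean energy 3/2 U the difference
   D_KL(p || f_Mxw T1) - D_KL(p || f_Mxw T2) depends on p only through U and equals
   3/2 (d_IS U T1 - d_IS U T2).  Both f_kappa (a Beta integral of the second kind) and f_Mxw Teff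
   (a Gamma integral) have mean energy 3/2 Teff, and D_KL(p || p) = 0; hence both differences in
   the theorem equal 3/2 d_IS Teff Tcore, and Teff / Tcore = R0. *)

lemma Gamma_three_halves: "Gamma (3/2 :: real) = sqrt pi / 2"
  using Gamma_plus1[of "1/2 :: real"] Gamma_one_half_real nonpos_Ints_nonpos[of "1/2 :: real"]
  by force

lemma Gamma_five_halves: "Gamma (5/2 :: real) = 3/4 * sqrt pi"
  using Gamma_plus1[of "3/2 :: real"] Gamma_three_halves nonpos_Ints_nonpos[of "3/2 :: real"]
  by force

lemma set_integral_powr_times_exp:
  fixes a T :: real
  assumes a: "0 < a" and T: "0 < T"
  shows "set_integrable lborel {0<..} (\<lambda>x. x powr (a - 1) * exp (- x / T))"
    and "(LBINT x:{0<..}. x powr (a - 1) * exp (- x / T)) = T powr a * Gamma a"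
proof -
  define g where "g t = indicator {0<..} t *\<^sub>R (t powr (a - 1) * exp (- t))" for t :: real
  define f where "f x = indicator {0<..} x *\<^sub>R (x powr (a - 1) * exp (- x / T))" for x :: real
  have "has_bochner_integral lborel g (Gamma a)"
  proof (rule has_bochner_integral_nn_integral)
    show "g \<in> borel_measurable lborel"
      unfolding g_def[abs_def] by measurable
    show "AE t in lborel. 0 \<le> g t"
      by (simp add: g_def)
    show "0 \<le> Gamma a"
      using a by (simp add: Gamma_real_pos less_imp_le)
    have "(\<integral>\<^sup>+t. ennreal (g t) \<partial>lborel)
        = (\<integral>\<^sup>+t. ennreal (indicator {0..} t * t powr (a - 1) / exp t) \<partial>lborel)"
      by (rule nn_integral_cong) (auto simp: g_def indicator_def exp_minus field_simps)
    then show "(\<integral>\<^sup>+t. ennreal (g t) \<partial>lborel) = ennreal (Gamma a)"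
      using Gamma_conv_nn_integral_real[OF a] by simp
  qed
  then have "has_bochner_integral lborel (\<lambda>t. T powr (a - 1) * g t) (T powr (a - 1) * Gamma a)"
    by (rule has_bochner_integral_mult_right)
  moreover have "(\<lambda>t. T powr (a - 1) * g t) = (\<lambda>t. f (0 + T * t))"
    using T by (auto simp: fun_eq_iff f_def g_def indicator_def powr_mult zero_less_mult_iff)
  moreover have "T powr (a - 1) * Gamma a = T powr a * Gamma a /\<^sub>R \<bar>T\<bar>"
    using T by (simp add: powr_diff field_simps)
  ultimately have "has_bochner_integral lborel (\<lambda>t. f (0 + T * t)) (T powr a * Gamma a /\<^sub>R \<bar>T\<bar>)"
    by simp
  then have "has_bochner_integral lborel f (T powr a * Gamma a)"
    using lborel_has_bochner_integral_real_affine_iff[of T f _ 0] T by blast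
  then show "set_integrable lborel {0<..} (\<lambda>x. x powr (a - 1) * exp (- x / T))"
    and "(LBINT x:{0<..}. x powr (a - 1) * exp (- x / T)) = T powr a * Gamma a"
    by (auto simp: has_bochner_integral_iff set_integrable_def set_lebesgue_integral_def f_def[abs_def])
qed

lemma Beta_second_kind_substitution:
  fixes a b T t :: real
  assumes T: "0 < T" and t: "0 < t" "t < 1"
  defines "x \<equiv> T * t / (1 - t)"
  shows "x powr (a - 1) * (1 + x / T) powr - (a + b) * (T / (1 - t)\<^sup>2)
       = T powr a * (t powr (a - 1) * (1 - t) powr (b - 1))"
proof -
  have u: "0 < 1 - t" using t by simp
  have "1 + x / T = (1 - t) powr - 1"
    using u T by (simp add: x_def powr_minus field_simps)
  then have "(1 + x / T) powr - (a + b) = (1 - t) powr (a + b)"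
    by (simp only: powr_powr) (simp add: add.commute)
  moreover have "x powr (a - 1) = T powr (a - 1) * t powr (a - 1) * (1 - t) powr - (a - 1)"
    unfolding powr_minus using u T t
    by (simp add: x_def powr_mult powr_divide divide_inverse inverse_powr)
  moreover have "T / (1 - t)\<^sup>2 = T * (1 - t) powr - 2"
    unfolding powr_minus using u by (simp add: powr_realpow divide_inverse)
  ultimately have "x powr (a - 1) * (1 + x / T) powr - (a + b) * (T / (1 - t)\<^sup>2)
      = (T powr (a - 1) * T) * t powr (a - 1)
        * ((1 - t) powr - (a - 1) * (1 - t) powr (a + b) * (1 - t) powr - 2)"
    by simp
  also have "(1 - t) powr - (a - 1) * (1 - t) powr (a + b) * (1 - t) powr - 2 = (1 - t) powr (b - 1)"
    by (simp add: powr_add[symmetric])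
  also have "T powr (a - 1) * T = T powr a"
    using T by (simp add: powr_diff)
  finally show ?thesis by simp
qed

lemma set_integral_Beta_second_kind_change_vars:
  fixes a b T :: real
  assumes a: "0 < a" and b: "0 < b" and T: "0 < T"
  shows "set_integrable lborel {0<..} (\<lambda>x. x powr (a - 1) * (1 + x / T) powr - (a + b))"
    and "(LBINT x:{0<..}. x powr (a - 1) * (1 + x / T) powr - (a + b))
           = (LBINT t=0..1. T powr a * (t powr (a - 1) * (1 - t) powr (b - 1)))"
proof -
  define f where "f x = x powr (a - 1) * (1 + x / T) powr - (a + b)" for x
  define g where "g t = T * t / (1 - t)" for t
  define g' where "g' t = T / (1 - t)\<^sup>2" for t
  define k where "k t = T powr a * (t powr (a - 1) * (1 - t) powr (b - 1))" for t
  have fg: "f (g t) * g' t = k t" if "0 < t" "t < 1" for t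
    using Beta_second_kind_substitution[OF T that] by (simp add: f_def g_def g'_def k_def)
  have I01: "einterval 0 1 = {0::real<..<1}" and I0inf: "einterval 0 \<infinity> = {0::real<..}"
    by (simp_all add: zero_ereal_def one_ereal_def)
  have lim0: "((ereal \<circ> g \<circ> real_of_ereal) \<longlongrightarrow> 0) (at_right 0)"
    unfolding zero_ereal_def ereal_tendsto_simps o_assoc[symmetric] g_def by real_asymp
  have "filterlim g at_top (at_left 1)"
    unfolding g_def using T by real_asymp
  then have lim1: "((ereal \<circ> g \<circ> real_of_ereal) \<longlongrightarrow> \<infinity>) (at_left 1)"
    by (simp add: at_left_ereal one_ereal_def filterlim_filtermap tendsto_PInfty_eq_at_top o_def)
  have "set_integrable lborel {0<..<1} k"
    unfolding k_def
    by (intro set_integrable_mult_right set_integrable_subset[OF integrable_Beta[OF a b]]) auto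
  then have int_fg: "set_integrable lborel (einterval 0 1) (\<lambda>t. f (g t) * g' t)"
    by (rule set_integrable_cong[THEN iffD2, rotated -1]) (auto simp: fg I01)
  have "(g has_real_derivative g' t) (at t)" if "t < 1" for t
    using that T unfolding g_def g'_def
    by (auto intro!: derivative_eq_intros simp: field_simps power2_eq_square)
  moreover have "isCont f x" if "0 < x" for x
    using that T add_pos_pos[of 1 "x / T"] unfolding f_def by (auto intro!: continuous_intros)
  ultimately have "(0::ereal) < 1"
    "\<And>t. 0 < ereal t \<Longrightarrow> ereal t < 1 \<Longrightarrow> (g has_real_derivative g' t) (at t)"
    "\<And>t. 0 < ereal t \<Longrightarrow> ereal t < 1 \<Longrightarrow> isCont f (g t)"
    "\<And>t. 0 < ereal t \<Longrightarrow> ereal t < 1 \<Longrightarrow> isCont g' t"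
    "\<And>t. 0 < ereal t \<Longrightarrow> ereal t < 1 \<Longrightarrow> 0 \<le> f (g t)"
    "\<And>t. 0 \<le> ereal t \<Longrightarrow> ereal t \<le> 1 \<Longrightarrow> 0 \<le> g' t"
    using T by (auto simp: zero_ereal_def one_ereal_def g_def g'_def[abs_def] f_def
        intro!: continuous_intros)
  note subst = interval_integral_substitution_nonneg[OF this lim0 lim1 int_fg]
  show "set_integrable lborel {0<..} (\<lambda>x. x powr (a - 1) * (1 + x / T) powr - (a + b))"
    using subst(1) unfolding I0inf f_def[abs_def] .
  have "(LBINT x:{0<..}. f x) = (LBINT t=0..1. f (g t) * g' t)"
    using subst(2) by (simp add: interval_lebesgue_integral_def I0inf)
  also have "\<dots> = (LBINT t=0..1. k t)"
    by (rule interval_integral_cong) (simp add: I01 fg)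
  finally show "(LBINT x:{0<..}. x powr (a - 1) * (1 + x / T) powr - (a + b))
      = (LBINT t=0..1. T powr a * (t powr (a - 1) * (1 - t) powr (b - 1)))"
    by (simp add: f_def k_def)
qed

lemma set_integral_Beta_second_kind:
  fixes a b T :: real
  assumes a: "0 < a" and b: "0 < b" and T: "0 < T"
  shows "set_integrable lborel {0<..} (\<lambda>x. x powr (a - 1) * (1 + x / T) powr - (a + b))"
    and "(LBINT x:{0<..}. x powr (a - 1) * (1 + x / T) powr - (a + b)) = T powr a * Beta a b"
proof -
  note change_vars = set_integral_Beta_second_kind_change_vars[OF a b T]
  show "set_integrable lborel {0<..} (\<lambda>x. x powr (a - 1) * (1 + x / T) powr - (a + b))"
    by (rule change_vars(1))
  have "(LBINT t=0..1. t powr (a - 1) * (1 - t) powr (b - 1))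
      = (LBINT t:{0..1}. t powr (a - 1) * (1 - t) powr (b - 1))"
    using interval_integral_Icc[of 0 1] by (simp add: zero_ereal_def one_ereal_def)
  also have "\<dots> = Beta a b"
    using set_borel_integral_eq_integral(2)[OF integrable_Beta[OF a b]]
      integral_unique[OF has_integral_Beta_real[OF a b]] by simp
  finally show "(LBINT x:{0<..}. x powr (a - 1) * (1 + x / T) powr - (a + b)) = T powr a * Beta a b"
    unfolding change_vars(2) by simp
qed

lemma powr_times_f_Mxw:
  fixes T E m :: real
  assumes "0 < E"
  shows "E powr m * f_Mxw T E = 2 / sqrt pi * T powr - (3/2) * (E powr (m + 3/2 - 1) * exp (- E / T))"
proof -
  have "E powr m * sqrt E = E powr (m + 3/2 - 1)"
    using assms by (simp add: powr_half_sqrt[symmetric] powr_add[symmetric] add.commute)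
  then show ?thesis
    by (simp add: f_Mxw_def mult_ac)
qed

lemma powr_times_f_kappa:
  fixes \<kappa> Teff E m :: real
  assumes "0 < E"
  defines "T0 \<equiv> (\<kappa> - 3/2) * Teff"
  shows "E powr m * f_kappa \<kappa> Teff E
       = 2 / sqrt pi * (Gamma (\<kappa> + 1) / Gamma (\<kappa> - 1/2)) * T0 powr - (3/2)
         * (E powr (m + 3/2 - 1) * (1 + E / T0) powr - ((m + 3/2) + (\<kappa> - 1/2 - m)))"
proof -
  have "E powr m * sqrt E = E powr (m + 3/2 - 1)"
    using assms by (simp add: powr_half_sqrt[symmetric] powr_add[symmetric] add.commute)
  moreover have "- ((m + 3/2) + (\<kappa> - 1/2 - m)) = - (\<kappa> + 1)"
    by simp
  ultimately show ?thesis
    by (simp only:) (simp add: f_kappa_def Let_def T0_def mult_ac)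
qed

lemma set_integral_powr_f_Mxw:
  fixes T m :: real
  assumes T: "0 < T" and m: "-(3/2) < m"
  shows "set_integrable lborel {0<..} (\<lambda>E. E powr m * f_Mxw T E)"
    and "(LBINT E:{0<..}. E powr m * f_Mxw T E) = 2 / sqrt pi * T powr m * Gamma (m + 3/2)"
proof -
  define c where "c = 2 / sqrt pi * T powr - (3/2)"
  note Gamma_int = set_integral_powr_times_exp[of "m + 3/2" T]
  have "set_integrable lborel {0<..} (\<lambda>E. c * (E powr (m + 3/2 - 1) * exp (- E / T)))"
    using Gamma_int(1) m T by simp
  then show "set_integrable lborel {0<..} (\<lambda>E. E powr m * f_Mxw T E)"
    by (rule set_integrable_cong[THEN iffD2, rotated -1]) (simp_all add: powr_times_f_Mxw c_def)
  have "(LBINT E:{0<..}. E powr m * f_Mxw T E)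
      = (LBINT E:{0<..}. c * (E powr (m + 3/2 - 1) * exp (- E / T)))"
    by (intro set_lebesgue_integral_cong) (simp_all add: powr_times_f_Mxw c_def)
  also have "\<dots> = c * (T powr (m + 3/2) * Gamma (m + 3/2))"
    using Gamma_int(2) m T by simp
  also have "\<dots> = 2 / sqrt pi * T powr m * Gamma (m + 3/2)"
    using T by (simp add: c_def powr_add[symmetric])
  finally show "(LBINT E:{0<..}. E powr m * f_Mxw T E) = 2 / sqrt pi * T powr m * Gamma (m + 3/2)" .
qed

lemma set_integral_powr_f_kappa:
  fixes \<kappa> Teff m :: real
  assumes \<kappa>: "3/2 < \<kappa>" and Teff: "0 < Teff" and m: "-(3/2) < m" "m < \<kappa> - 1/2"
  defines "T0 \<equiv> (\<kappa> - 3/2) * Teff"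
  shows "set_integrable lborel {0<..} (\<lambda>E. E powr m * f_kappa \<kappa> Teff E)"
    and "(LBINT E:{0<..}. E powr m * f_kappa \<kappa> Teff E)
           = 2 / sqrt pi * T0 powr m * Gamma (m + 3/2) * Gamma (\<kappa> - 1/2 - m) / Gamma (\<kappa> - 1/2)"
proof -
  have T0: "0 < T0" using \<kappa> Teff by (simp add: T0_def)
  define c where "c = 2 / sqrt pi * (Gamma (\<kappa> + 1) / Gamma (\<kappa> - 1/2)) * T0 powr - (3/2)"
  define h where "h E = E powr (m + 3/2 - 1) * (1 + E / T0) powr - ((m + 3/2) + (\<kappa> - 1/2 - m))" for E
  note Beta_int = set_integral_Beta_second_kind[of "m + 3/2" "\<kappa> - 1/2 - m" T0]
  have "set_integrable lborel {0<..} (\<lambda>E. c * h E)"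
    using Beta_int(1) m T0 by (simp add: h_def)
  then show "set_integrable lborel {0<..} (\<lambda>E. E powr m * f_kappa \<kappa> Teff E)"
    by (rule set_integrable_cong[THEN iffD2, rotated -1])
      (simp_all add: powr_times_f_kappa c_def h_def T0_def)
  have "(LBINT E:{0<..}. E powr m * f_kappa \<kappa> Teff E) = (LBINT E:{0<..}. c * h E)"
    by (intro set_lebesgue_integral_cong) (simp_all add: powr_times_f_kappa c_def h_def T0_def)
  also have "\<dots> = c * (T0 powr (m + 3/2) * Beta (m + 3/2) (\<kappa> - 1/2 - m))"
    using Beta_int(2) m T0 by (simp add: h_def)
  also have "\<dots> = 2 / sqrt pi * T0 powr m * Gamma (m + 3/2) * Gamma (\<kappa> - 1/2 - m) / Gamma (\<kappa> - 1/2)"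
  proof -
    have "m + 3/2 + (\<kappa> - 1/2 - m) = \<kappa> + 1" by simp
    then have Beta_eq: "Beta (m + 3/2) (\<kappa> - 1/2 - m)
        = Gamma (m + 3/2) * Gamma (\<kappa> - 1/2 - m) / Gamma (\<kappa> + 1)"
      by (simp only: Beta_def)
    have "Gamma (\<kappa> + 1) \<noteq> 0"
      using \<kappa> by (simp add: Gamma_real_pos less_imp_neq[symmetric])
    moreover have "T0 powr m = T0 powr - (3/2) * T0 powr (m + 3/2)"
      by (simp add: powr_add[symmetric])
    ultimately show ?thesis
      unfolding c_def Beta_eq by (simp add: field_simps)
  qed
  finally show "(LBINT E:{0<..}. E powr m * f_kappa \<kappa> Teff E)
      = 2 / sqrt pi * T0 powr m * Gamma (m + 3/2) * Gamma (\<kappa> - 1/2 - m) / Gamma (\<kappa> - 1/2)" .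
qed

definition energy_density :: "(real \<Rightarrow> real) \<Rightarrow> bool" where
  "energy_density p \<longleftrightarrow> (\<forall>E>0. 0 \<le> p E) \<and> set_integrable lborel {0<..} p
     \<and> (LBINT E:{0<..}. p E) = 1 \<and> set_integrable lborel {0<..} (\<lambda>E. E * p E)"

definition mean_energy :: "(real \<Rightarrow> real) \<Rightarrow> real" where
  "mean_energy p = (LBINT E:{0<..}. E * p E)"

lemma energy_density_of_moments:
  fixes p :: "real \<Rightarrow> real"
  assumes "\<And>E. 0 < E \<Longrightarrow> 0 \<le> p E"
    and "set_integrable lborel {0<..} (\<lambda>E. E powr 0 * p E)" "(LBINT E:{0<..}. E powr 0 * p E) = 1"
    and "set_integrable lborel {0<..} (\<lambda>E. E powr 1 * p E)" "(LBINT E:{0<..}. E powr 1 * p E) = U"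
  shows "energy_density p" and "mean_energy p = U"
proof -
  from assms(2) have "set_integrable lborel {0<..} p"
    by (rule set_integrable_cong[THEN iffD1, rotated -1]) auto
  moreover from assms(4) have "set_integrable lborel {0<..} (\<lambda>E. E * p E)"
    by (rule set_integrable_cong[THEN iffD1, rotated -1]) auto
  moreover have "(LBINT E:{0<..}. p E) = (LBINT E:{0<..}. E powr 0 * p E)"
    by (rule set_lebesgue_integral_cong) auto
  moreover have "mean_energy p = (LBINT E:{0<..}. E powr 1 * p E)"
    unfolding mean_energy_def by (rule set_lebesgue_integral_cong) auto
  ultimately show "energy_density p" and "mean_energy p = U"
    using assms by (auto simp: energy_density_def)
qed

lemma
  fixes T :: real
  assumes T: "0 < T"
  shows energy_density_f_Mxw: "energy_density (f_Mxw T)"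
    and mean_energy_f_Mxw: "mean_energy (f_Mxw T) = 3/2 * T"
proof -
  have "-(3/2) < (0::real)" "-(3/2) < (1::real)" by simp_all
  note M0 = set_integral_powr_f_Mxw[OF T this(1)] and M1 = set_integral_powr_f_Mxw[OF T this(2)]
  have "(LBINT E:{0<..}. E powr 0 * f_Mxw T E) = 1"
    using M0(2) T by (simp add: Gamma_three_halves)
  moreover have "(LBINT E:{0<..}. E powr 1 * f_Mxw T E) = 3/2 * T"
    using M1(2) T by (simp add: Gamma_five_halves)
  moreover have "0 \<le> f_Mxw T E" if "0 < E" for E
    using T that by (simp add: f_Mxw_def)
  ultimately show "energy_density (f_Mxw T)" "mean_energy (f_Mxw T) = 3/2 * T"
    using energy_density_of_moments[OF _ M0(1) _ M1(1)] by blast+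
qed

lemma
  fixes \<kappa> Teff :: real
  assumes \<kappa>: "3/2 < \<kappa>" and Teff: "0 < Teff"
  shows energy_density_f_kappa: "energy_density (f_kappa \<kappa> Teff)"
    and mean_energy_f_kappa: "mean_energy (f_kappa \<kappa> Teff) = 3/2 * Teff"
proof -
  have "-(3/2) < (0::real)" "0 < \<kappa> - 1/2" "-(3/2) < (1::real)" "1 < \<kappa> - 1/2"
    using \<kappa> by simp_all
  note M0 = set_integral_powr_f_kappa[OF \<kappa> Teff this(1,2)]
    and M1 = set_integral_powr_f_kappa[OF \<kappa> Teff this(3,4)]
  have "Gamma (\<kappa> - 1/2) = (\<kappa> - 3/2) * Gamma (\<kappa> - 3/2)"
    using Gamma_plus1[of "\<kappa> - 3/2"] \<kappa> nonpos_Ints_nonpos[of "\<kappa> - 3/2"] by force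
  moreover have "Gamma (\<kappa> - 3/2) \<noteq> 0"
    using \<kappa> Gamma_real_pos[of "\<kappa> - 3/2"] by force
  ultimately have "(LBINT E:{0<..}. E powr 0 * f_kappa \<kappa> Teff E) = 1"
    and "(LBINT E:{0<..}. E powr 1 * f_kappa \<kappa> Teff E) = 3/2 * Teff"
    using M0(2) M1(2) \<kappa> Teff by (simp_all add: Gamma_three_halves Gamma_five_halves)
  moreover have "0 \<le> f_kappa \<kappa> Teff E" if "0 < E" for E
    using \<kappa> Teff that by (simp add: f_kappa_def Let_def Gamma_real_pos)
  ultimately show "energy_density (f_kappa \<kappa> Teff)" "mean_energy (f_kappa \<kappa> Teff) = 3/2 * Teff"
    using energy_density_of_moments[OF _ M0(1) _ M1(1)] by blast+
qed

lemma d_IS_self: "x \<noteq> 0 \<Longrightarrow> d_IS x x = 0"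
  by (simp add: d_IS_def)

lemma f_Mxw_pos: "0 < T \<Longrightarrow> 0 < E \<Longrightarrow> 0 < f_Mxw T E"
  by (simp add: f_Mxw_def)

lemma ln_f_Mxw_ratio:
  fixes T1 T2 E :: real
  assumes T1: "0 < T1" and T2: "0 < T2" and E: "0 < E"
  shows "ln (f_Mxw T2 E / f_Mxw T1 E) = 3/2 * ln (T1 / T2) + E / T1 - E / T2"
proof -
  have "f_Mxw T2 E / f_Mxw T1 E = (T1 / T2) powr (3/2) * (exp (- E / T2) / exp (- E / T1))"
    using assms by (simp add: f_Mxw_def powr_minus powr_divide field_simps)
  then show ?thesis
    using assms by (simp add: ln_mult ln_div)
qed

lemma D_KL_f_Mxw_diff:
  fixes p :: "real \<Rightarrow> real" and T T1 T2 :: real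
  assumes p: "energy_density p" and mean: "mean_energy p = 3/2 * T"
    and T: "0 < T" and T1: "0 < T1" and T2: "0 < T2"
    and int2: "set_integrable lborel {0<..} (\<lambda>E. p E * ln (p E / f_Mxw T2 E))"
  shows "D_KL p (f_Mxw T1) - D_KL p (f_Mxw T2) = 3/2 * (d_IS T T1 - d_IS T T2)"
proof -
  define lin where "lin E = 3/2 * ln (T1 / T2) * p E + (1/T1 - 1/T2) * (E * p E)" for E
  from p have nonneg: "\<And>E. 0 < E \<Longrightarrow> 0 \<le> p E"
    and int_p: "set_integrable lborel {0<..} p" and norm: "(LBINT E:{0<..}. p E) = 1"
    and int_Ep: "set_integrable lborel {0<..} (\<lambda>E. E * p E)"
    unfolding energy_density_def by auto
  have split: "p E * ln (p E / f_Mxw T1 E) = p E * ln (p E / f_Mxw T2 E) + lin E"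
    if "E \<in> {0<..}" for E
  proof (cases "p E = 0")
    case False
    with nonneg that have "0 < p E" by force
    moreover have "0 < f_Mxw T1 E" "0 < f_Mxw T2 E"
      using that T1 T2 by (simp_all add: f_Mxw_pos)
    ultimately have L: "ln (p E / f_Mxw T1 E)
        = ln (p E / f_Mxw T2 E) + 3/2 * ln (T1 / T2) + E / T1 - E / T2"
      using ln_f_Mxw_ratio[OF T1 T2, of E] that by (simp add: ln_div)
    show ?thesis
      unfolding L lin_def using T1 T2 by (simp add: field_simps)
  qed (simp add: lin_def)
  have int_lin: "set_integrable lborel {0<..} lin"
    unfolding lin_def[abs_def] using int_p int_Ep by auto
  have "D_KL p (f_Mxw T1) = (LBINT E:{0<..}. p E * ln (p E / f_Mxw T2 E) + lin E)"
    unfolding D_KL_def using split by (intro set_lebesgue_integral_cong) auto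
  also have "\<dots> = D_KL p (f_Mxw T2) + (LBINT E:{0<..}. lin E)"
    unfolding D_KL_def using int2 int_lin by (rule set_integral_add(2))
  also have "(LBINT E:{0<..}. lin E) = 3/2 * ln (T1 / T2) + (1/T1 - 1/T2) * (3/2 * T)"
    using int_p int_Ep norm mean unfolding lin_def mean_energy_def by simp
  also have "ln (T1 / T2) = ln (T / T2) - ln (T / T1)"
    using T T1 T2 by (simp add: ln_div)
  finally show ?thesis
    unfolding d_IS_def using T1 T2 by (simp add: field_simps)
qed

corollary D_KL_f_Mxw_f_Mxw:
  fixes T T' :: real
  assumes T: "0 < T" and T': "0 < T'"
  shows "D_KL (f_Mxw T) (f_Mxw T') = 3/2 * d_IS T T'"
proof -
  have self: "(\<lambda>E. f_Mxw T E * ln (f_Mxw T E / f_Mxw T E)) = (\<lambda>E. 0)"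
    by (rule ext) (cases "f_Mxw T E = 0"; simp)
  then have "D_KL (f_Mxw T) (f_Mxw T) = 0"
    by (simp add: D_KL_def)
  moreover have "set_integrable lborel {0<..} (\<lambda>E. f_Mxw T E * ln (f_Mxw T E / f_Mxw T E))"
    unfolding self set_integrable_def by simp
  ultimately show ?thesis
    using D_KL_f_Mxw_diff[OF energy_density_f_Mxw[OF T] mean_energy_f_Mxw[OF T] T T' T] T
    by (simp add: d_IS_self)
qed

lemma ln_f_kappa_div_f_Mxw:
  fixes \<kappa> Teff T E :: real
  assumes \<kappa>: "3/2 < \<kappa>" and Teff: "0 < Teff" and T: "0 < T" and E: "0 < E"
  defines "T0 \<equiv> (\<kappa> - 3/2) * Teff"
  shows "ln (f_kappa \<kappa> Teff E / f_Mxw T E)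
       = ln (Gamma (\<kappa> + 1) / Gamma (\<kappa> - 1/2) * (T / T0) powr (3/2))
         - (\<kappa> + 1) * ln (1 + E / T0) + E / T"
proof -
  have T0: "0 < T0" using \<kappa> Teff by (simp add: T0_def)
  define C where "C = Gamma (\<kappa> + 1) / Gamma (\<kappa> - 1/2) * (T / T0) powr (3/2)"
  have "f_kappa \<kappa> Teff E
      = 2 / sqrt pi * (Gamma (\<kappa> + 1) / Gamma (\<kappa> - 1/2)) * T0 powr - (3/2) * sqrt E
        * (1 + E / T0) powr - (\<kappa> + 1)"
    by (simp add: f_kappa_def Let_def T0_def)
  then have "f_kappa \<kappa> Teff E / f_Mxw T E = C * ((1 + E / T0) powr - (\<kappa> + 1) / exp (- E / T))"
    using T T0 E by (simp add: C_def f_Mxw_def powr_minus powr_divide field_simps)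
  moreover have "0 < C" "0 < 1 + E / T0"
    using \<kappa> T T0 E by (simp_all add: C_def Gamma_real_pos add_pos_pos)
  ultimately show ?thesis
    unfolding C_def[symmetric] by (simp add: ln_mult ln_div algebra_simps)
qed

lemma set_integrable_f_kappa_ln_ratio:
  fixes \<kappa> Teff T :: real
  assumes \<kappa>: "3/2 < \<kappa>" and Teff: "0 < Teff" and T: "0 < T"
  shows "set_integrable lborel {0<..} (\<lambda>E. f_kappa \<kappa> Teff E * ln (f_kappa \<kappa> Teff E / f_Mxw T E))"
proof -
  define T0 where "T0 = (\<kappa> - 3/2) * Teff"
  define c where "c = ln (Gamma (\<kappa> + 1) / Gamma (\<kappa> - 1/2) * (T / T0) powr (3/2))"
  let ?f = "f_kappa \<kappa> Teff"
  have T0: "0 < T0" using \<kappa> Teff by (simp add: T0_def)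
  from energy_density_f_kappa[OF \<kappa> Teff]
  have nonneg: "\<And>E. 0 < E \<Longrightarrow> 0 \<le> ?f E" and int_f: "set_integrable lborel {0<..} ?f"
    and int_Ef: "set_integrable lborel {0<..} (\<lambda>E. E * ?f E)"
    unfolding energy_density_def by auto
  have "set_integrable lborel {0<..} (\<lambda>E. ?f E * ln (1 + E / T0))"
  proof (rule set_integrable_bound)
    show "set_integrable lborel {0<..} (\<lambda>E. 1 / T0 * (E * ?f E))"
      using int_Ef by simp
    show "set_borel_measurable lborel {0<..} (\<lambda>E. ?f E * ln (1 + E / T0))"
      unfolding set_borel_measurable_def f_kappa_def Let_def by measurable
    have "norm (?f E * ln (1 + E / T0)) \<le> norm (1 / T0 * (E * ?f E))" if "0 < E" for E
    proof -
      have "?f E * ln (1 + E / T0) \<le> ?f E * (E / T0)"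
        using that T0 nonneg[OF that] ln_add_one_self_le_self[of "E / T0"]
        by (intro mult_left_mono) auto
      moreover have "0 \<le> ln (1 + E / T0)"
        using that T0 by simp
      ultimately show ?thesis
        using that T0 nonneg[OF that] by (simp add: abs_mult mult_ac)
    qed
    then show "AE E in lborel. E \<in> {0<..} \<longrightarrow> norm (?f E * ln (1 + E / T0)) \<le> norm (1 / T0 * (E * ?f E))"
      by auto
  qed
  then have "set_integrable lborel {0<..}
      (\<lambda>E. c * ?f E - (\<kappa> + 1) * (?f E * ln (1 + E / T0)) + 1 / T * (E * ?f E))"
    using int_f int_Ef by auto
  then show ?thesis
    by (rule set_integrable_cong[THEN iffD1, rotated -1])
      (simp_all add: ln_f_kappa_div_f_Mxw[OF \<kappa> Teff T] c_def T0_def algebra_simps)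
qed

theorem mainTheorem2:
  fixes \<kappa> Teff :: real
  assumes "\<kappa> > 3/2" and "Teff > 0"
  defines "Tcore \<equiv> (\<kappa> - 3/2) / \<kappa> * Teff"
      and "R0 \<equiv> \<kappa> / (\<kappa> - 3/2)"
  defines "\<Delta> \<equiv> D_KL (f_kappa \<kappa> Teff) (f_Mxw Tcore) - D_KL (f_kappa \<kappa> Teff) (f_Mxw Teff)"
  shows "\<Delta> = 3/2 * (R0 - ln R0 - 1) \<and> \<Delta> = 3/2 * d_IS Teff Tcore
         \<and> \<Delta> = D_KL (f_Mxw Teff) (f_Mxw Tcore)"
proof -
  have Tcore: "0 < Tcore"
    using assms(1,2) unfolding Tcore_def by simp
  have "Teff / Tcore = R0"
    using assms(1,2) unfolding Tcore_def R0_def by (simp add: field_simps)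
  then have IS: "d_IS Teff Tcore = R0 - ln R0 - 1"
    by (simp add: d_IS_def)
  have "\<Delta> = 3/2 * (d_IS Teff Tcore - d_IS Teff Teff)"
    unfolding \<Delta>_def using assms(1,2) Tcore
    by (intro D_KL_f_Mxw_diff energy_density_f_kappa mean_energy_f_kappa set_integrable_f_kappa_ln_ratio)
  then have "\<Delta> = 3/2 * d_IS Teff Tcore"
    using assms(2) by (simp add: d_IS_self)
  then show ?thesis
    using IS D_KL_f_Mxw_f_Mxw[OF assms(2) Tcore] by simp
qed

end
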